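(* Let $d\geq 2$ and $k\geq 1$. For every simplicial complex $\mathsf{X}^d_k$ constructed as below (with any choices), $\mathsf{X}^d_k$ has $k(d+2)$ vertices, $\tau(\mathcal{F}(\mathsf{X}^d_k))=2k$, and no transversal of $\mathcal{F}(\mathsf{X}^d_k)$ of size $2k$ contains all vertices of a facet of $\mathsf{X}^d_k$ that contains the apex vertex of $\mathsf{X}^d_k$.
   Context: Connected sum: for PL $d$-spheres $\mathsf{K}_1,\mathsf{K}_2$, facets $f_i$ of $\mathsf{K}_i$ and a bijection $\psi:f_1\to f_2$, $\mathsf{K}_1\#_\psi\mathsf{K}_2=\big((\mathsf{K}_1\setminus\{f_1\})\sqcup(\mathsf{K}_2\setminus\{f_2\})\big)/\sim_\psi$, identifying every proper subface $g_1$ of $f_1$ with $\psi(g_1)$. Let $\mathsf{S}^d$ be the boundary complex of the abstract $(d+1)$-simplex on $d+2$ vertices, and $\mathsf{C}^d=\mathsf{S}^0*\cdots*\mathsf{S}^0$ ($(d+1)$-fold join) the boundary complex of the $(d+1)$-dimensional cross polytope, with its antipodal involution on vertices; the antipodal facet of a facet $f$ of $\mathsf{C}^d$ is the set of antipodes of its vertices. Let $\mathsf{C}^d_+=\mathsf{C}^d\#_{\psi_S}\mathsf{S}^d$ for a facet $f$ of $\mathsf{C}^d$, a facet $g$ of $\mathsf{S}^d$ and a bijection $\psi_S:f\to g$; its apex vertex is the vertex of $\mathsf{S}^d$ not in $g$, and its base facet is the facet of $\mathsf{C}^d$ antipodal to $f$. Define $\mathsf{X}^d_1=\mathsf{S}^d$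 with an arbitrary vertex chosen as apex vertex. For $k\geq 2$, $\mathsf{X}^d_k=\mathsf{X}^d_{k-1}\#_{\psi_k}\mathsf{C}^d_+$ where $\psi_k$ is any bijection from a facet $f_{k-1}$ of $\mathsf{X}^d_{k-1}$ containing the apex vertex of $\mathsf{X}^d_{k-1}$ to the base facet of $\mathsf{C}^d_+$; the apex vertex of $\mathsf{X}^d_k$ is the apex vertex of this copy of $\mathsf{C}^d_+$. $\mathcal{F}(\cdot)$ is the facet hypergraph and $\tau$ the minimum size of a vertex set meeting all facets (a transversal). *)

theory Defs
  imports Main
begin

text \<open>A simplicial complex (here always a pure one, e.g. a PL sphere) is represented by its
  facet hypergraph: a set of facets, each a finite vertex set. Its vertex set is the union
  of its facets.\<close>

definition vertices :: "'v set set \<Rightarrow> 'v set" where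
  "vertices F = \<Union> F"

definition simplex_bd :: "'v set \<Rightarrow> 'v set set" where
  "simplex_bd W = {W - {w} | w. w \<in> W}"

text \<open>Boundary complex of the cross polytope, i.e. the join of the 0-spheres {v, s v},
  on vertex set V with fixed-point-free antipodal involution s: a facet picks exactly one
  vertex from each antipodal pair.\<close>
definition is_cross_data :: "nat \<Rightarrow> 'v set \<Rightarrow> ('v \<Rightarrow> 'v) \<Rightarrow> bool" where
  "is_cross_data d V s \<longleftrightarrow> finite V \<and> card V = 2 * (d + 1) \<and> s ` V \<subseteq> V \<and>
     (\<forall>v\<in>V. s v \<noteq> v \<and> s (s v) = v)"

definition cross_facets :: "'v set \<Rightarrow> ('v \<Rightarrow> 'v) \<Rightarrow> 'v set set" where
  "cross_facets V s = {f. f \<subseteq> V \<and> (\<forall>v\<in>V. (v \<in> f) \<noteq> (s v \<in> f))}"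

text \<open>Connected sum of (the facet hypergraphs of) two complexes with disjoint vertex sets
  along facets f1, f2 and a bijection psi : f1 \<rightarrow> f2: remove f1 and f2 and identify every
  vertex v of f2 with psi^{-1}(v).\<close>
definition consum :: "'v set set \<Rightarrow> 'v set set \<Rightarrow> 'v set \<Rightarrow> 'v set \<Rightarrow> ('v \<Rightarrow> 'v) \<Rightarrow> 'v set set" where
  "consum F1 F2 f1 f2 psi =
     (F1 - {f1}) \<union> (\<lambda>g. (\<lambda>v. if v \<in> f2 then inv_into f1 psi v else v) ` g) ` (F2 - {f2})"

definition consum_ok :: "'v set set \<Rightarrow> 'v set set \<Rightarrow> 'v set \<Rightarrow> 'v set \<Rightarrow> ('v \<Rightarrow> 'v) \<Rightarrow> bool" where
  "consum_ok F1 F2 f1 f2 psi \<longleftrightarrow> vertices F1 \<inter> vertices F2 = {} \<and> f1 \<in> F1 \<and> f2 \<in> F2 \<and>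
     bij_betw psi f1 f2"

text \<open>C^d_+ with apex vertex b and base facet base: obtained as C^d #_{psi_S} S^d for any
  facet f of C^d, facet g of S^d, bijection psi_S : f \<rightarrow> g; apex = vertex of S^d not in g;
  base facet = antipodal facet of f.\<close>
definition is_cplus :: "nat \<Rightarrow> 'v set set \<Rightarrow> 'v \<Rightarrow> 'v set \<Rightarrow> bool" where
  "is_cplus d G b base \<longleftrightarrow>
    (\<exists>V s W f g psiS. is_cross_data d V s \<and> finite W \<and> card W = d + 2 \<and>
       consum_ok (cross_facets V s) (simplex_bd W) f g psiS \<and>
       b \<in> W - g \<and> base = s ` f \<and>
       G = consum (cross_facets V s) (simplex_bd W) f g psiS)"

inductive is_X :: "nat \<Rightarrow> nat \<Rightarrow> 'v set set \<Rightarrow> 'v \<Rightarrow> bool" where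
  base: "finite W \<Longrightarrow> card W = d + 2 \<Longrightarrow> a \<in> W \<Longrightarrow> is_X d 1 (simplex_bd W) a"
| step: "is_X d k F a \<Longrightarrow> is_cplus d G b bs \<Longrightarrow> consum_ok F G f bs psi \<Longrightarrow> a \<in> f \<Longrightarrow>
         is_X d (Suc k) (consum F G f bs psi) b"

definition is_transversal :: "'v set set \<Rightarrow> 'v set \<Rightarrow> bool" where
  "is_transversal H T \<longleftrightarrow> T \<subseteq> vertices H \<and> (\<forall>e\<in>H. T \<inter> e \<noteq> {})"

definition tau :: "'v set set \<Rightarrow> nat" where
  "tau H = (LEAST n. \<exists>T. finite T \<and> card T = n \<and> is_transversal H T)"

end

theory Submission
  imports Defs
begin

text \<open>
  Induction on k with a strengthened invariant. Gluing C^d_+ onto the facet f through the apex a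
  of X_(k-1) removes f and adds d + 2 new vertices: a facet P of the cross polytope and the new
  apex b. A transversal T of X_k restricts to one of X_(k-1) (after adding one vertex of f if T
  misses f), and the new facets force at least two further vertices: if T misses P it contains f
  and b, if it misses f it contains P, and if it meets P in p then the cone facet opposite p
  forces b or a second vertex of P. In the first case the restriction contains the facet f
  through a, so we need that such transversals of X_(k-1) have at least 2k - 1 vertices; this
  property is inherited since a transversal containing a cone facet contains b and all but one
  vertex of P. Conversely, a minimum transversal through a extends by b and the preimage of a
  in P, so X_k again has a minimum transversal through its apex.
\<close>

lemma obtain_other_element:
  assumes "2 \<le> card A"
  obtains x where "x \<in> A" "x \<noteq> v"
proof (rule ccontr)
  assume "\<not> thesis"
  with that have "card A \<le> card {v}" by (intro card_mono) auto
  with assms show False by simp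
qed

context
  fixes d :: nat and V :: "'v set" and s :: "'v \<Rightarrow> 'v"
  assumes cross: "is_cross_data d V s"
begin

private lemma involution: "v \<in> V \<Longrightarrow> s v \<in> V \<and> s v \<noteq> v \<and> s (s v) = v"
  using cross unfolding is_cross_data_def by auto

lemma cross_inj_on: "inj_on s V"
  by (metis involution inj_onI)

context
  fixes f assumes facet: "f \<in> cross_facets V s"
begin

private lemma facetD: "f \<subseteq> V" "v \<in> V \<Longrightarrow> (v \<in> f) \<noteq> (s v \<in> f)"
  using facet unfolding cross_facets_def by auto

lemma cross_facet_disjoint_antipode: "f \<inter> s ` f = {}"
  using facetD involution by fastforce

lemma cross_facet_Un_antipode: "f \<union> s ` f = V"
proof (intro equalityI subsetI)
  fix v assume "v \<in> V"
  then show "v \<in> f \<union> s ` f"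
    using facetD(2)[of v] involution[of v] by (metis UnI1 UnI2 image_eqI)
qed (use facetD(1) involution in auto)

lemma card_cross_facet: "card f = d + 1"
proof -
  have "card V = card f + card (s ` f)"
    using cross cross_facet_Un_antipode cross_facet_disjoint_antipode
    by (metis card_Un_disjoint finite_Un is_cross_data_def)
  moreover have "card (s ` f) = card f"
    using cross_inj_on facetD(1) by (meson card_image inj_on_subset)
  ultimately show ?thesis
    using cross unfolding is_cross_data_def by simp
qed

lemma finite_cross_facet: "finite f"
  using cross facetD(1) finite_subset unfolding is_cross_data_def by blast

lemma cross_facet_decompose:
  assumes h: "h \<in> cross_facets V s"
  shows "h = (h \<inter> f) \<union> s ` (f - h)"
proof -
  have hV: "h \<subseteq> V" and h_xor: "\<And>v. v \<in> V \<Longrightarrow> (v \<in> h) \<noteq> (s v \<in> h)"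
    using h unfolding cross_facets_def by auto
  show ?thesis
  proof (intro equalityI subsetI)
    fix x assume "x \<in> h"
    moreover have "x \<in> f \<union> s ` f"
      using \<open>x \<in> h\<close> hV cross_facet_Un_antipode by blast
    moreover have "y \<notin> h" if "y \<in> f" "x = s y" for y
      using h_xor[of y] that \<open>x \<in> h\<close> facetD(1) by blast
    ultimately show "x \<in> (h \<inter> f) \<union> s ` (f - h)"
      by blast
  next
    fix x assume "x \<in> (h \<inter> f) \<union> s ` (f - h)"
    then show "x \<in> h"
      using h_xor facetD(1) by blast
  qed
qed

lemma mixed_cross_facet:
  assumes B: "B \<subseteq> f"
  shows "B \<union> s ` (f - B) \<in> cross_facets V s"
  unfolding cross_facets_def
proof (intro CollectI conjI ballI)
  have inj: "(s v \<in> s ` (f - B)) = (v \<in> f - B)" if "v \<in> V" for v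
    using cross_inj_on facetD(1) that by (auto simp: inj_on_def)
  show "B \<union> s ` (f - B) \<subseteq> V"
    using B facetD(1) cross_facet_Un_antipode by blast
  fix v assume v: "v \<in> V"
  then consider "v \<in> f" | y where "y \<in> f" "v = s y"
    using cross_facet_Un_antipode by blast
  then show "(v \<in> B \<union> s ` (f - B)) \<noteq> (s v \<in> B \<union> s ` (f - B))"
  proof cases
    case 1
    then have "s v \<notin> f" "v \<notin> s ` f"
      using facetD(2)[OF v] cross_facet_disjoint_antipode by blast+
    then show ?thesis
      using inj[OF v] 1 B by blast
  next
    case 2
    have "y \<in> V" using 2 facetD(1) by blast
    then have "s v = y" using 2 involution by simp
    moreover have "v \<notin> f" "y \<notin> s ` f" using 2 cross_facet_disjoint_antipode by auto
    ultimately show ?thesis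
      using inj[OF \<open>y \<in> V\<close>] 2 B by auto
  qed
qed

lemma cross_facets_eq_image_Pow: "cross_facets V s = (\<lambda>B. B \<union> s ` (f - B)) ` Pow f"
proof (intro equalityI subsetI)
  fix h assume "h \<in> cross_facets V s"
  moreover have "f - h \<inter> f = f - h"
    by blast
  ultimately have "h = (h \<inter> f) \<union> s ` (f - h \<inter> f)"
    using cross_facet_decompose by simp
  then show "h \<in> (\<lambda>B. B \<union> s ` (f - B)) ` Pow f"
    by blast
qed (use mixed_cross_facet in blast)

lemma antipode_cross_facet: "s ` f \<in> cross_facets V s"
  using cross_facets_eq_image_Pow by auto

lemma vertices_cross_facets: "vertices (cross_facets V s) = V"
proof
  show "vertices (cross_facets V s) \<subseteq> V"
    unfolding vertices_def cross_facets_def by blast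
  show "V \<subseteq> vertices (cross_facets V s)"
    using facet antipode_cross_facet cross_facet_Un_antipode
    unfolding vertices_def by (metis Sup_upper Un_least)
qed

lemma cross_facets_minus_antipodal_pair:
  "cross_facets V s - {f, s ` f} = (\<lambda>B. B \<union> s ` (f - B)) ` {B. B \<subseteq> f \<and> B \<noteq> {} \<and> B \<noteq> f}"
proof -
  let ?h = "\<lambda>B. B \<union> s ` (f - B)"
  have "?h B \<inter> f = B" if "B \<subseteq> f" for B
    using that cross_facet_disjoint_antipode by auto
  then have "inj_on ?h (Pow f)"
    by (metis (no_types, lifting) PowD inj_onI)
  then have "?h ` Pow f - ?h ` {f, {}} = ?h ` (Pow f - {f, {}})"
    by (intro inj_on_image_set_diff[symmetric]) auto
  moreover have "Pow f - {f, {}} = {B. B \<subseteq> f \<and> B \<noteq> {} \<and> B \<noteq> f}" by auto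
  ultimately show ?thesis
    unfolding cross_facets_eq_image_Pow by simp
qed

end
end

lemma vertices_simplex_bd:
  assumes "2 \<le> card W"
  shows "vertices (simplex_bd W) = W"
proof (intro equalityI subsetI)
  fix v assume v: "v \<in> W"
  obtain w where w: "w \<in> W" "w \<noteq> v"
    using assms by (rule obtain_other_element)
  have "W - {w} \<in> simplex_bd W"
    using w unfolding simplex_bd_def by blast
  then show "v \<in> vertices (simplex_bd W)"
    using v w unfolding vertices_def by blast
qed (auto simp: vertices_def simplex_bd_def)

text \<open>Connected sum with the boundary of a simplex is the stellar subdivision of the facet.\<close>

lemma consum_simplex_bd:
  assumes psi: "bij_betw psi f g" and b: "b \<in> W" "g = W - {b}"
  shows "consum F (simplex_bd W) f g psi = (F - {f}) \<union> (\<lambda>x. insert b (f - {x})) ` f"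
proof -
  define glue where "glue = (\<lambda>v. if v \<in> g then inv_into f psi v else v)"
  have inv: "bij_betw (inv_into f psi) g f"
    using psi by (rule bij_betw_inv_into)
  have "simplex_bd W - {g} = (\<lambda>w. W - {w}) ` g"
    using b unfolding simplex_bd_def by auto
  moreover have "glue ` (W - {w}) = insert b (f - {inv_into f psi w})" if "w \<in> g" for w
  proof -
    have "W - {w} = insert b (g - {w})" using b that by auto
    moreover have "glue ` (g - {w}) = inv_into f psi ` (g - {w})"
      unfolding glue_def by simp
    moreover have "inv_into f psi ` (g - {w}) = f - {inv_into f psi w}"
      using inv that by (auto simp: bij_betw_def inj_on_eq_iff)
    moreover have "glue b = b" using b unfolding glue_def by simp
    ultimately show ?thesis by simp
  qed
  ultimately have "(\<lambda>h. glue ` h) ` (simplex_bd W - {g}) = (\<lambda>x. insert b (f - {x})) ` (inv_into f psi ` g)"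
    by (simp add: image_image)
  also have "inv_into f psi ` g = f"
    using inv by (simp add: bij_betw_def)
  finally show ?thesis
    unfolding consum_def glue_def by simp
qed

text \<open>
  The facets of a complex after gluing C^d_+ onto its facet f: P is the facet of the cross
  polytope that was replaced by the simplex, and \<mu> is the antipodal map on P followed by the
  gluing map onto f.
  The cross polytope facets B \<union> s (P - B) other than P and its antipode become B \<union> \<mu> (P - B),
  and the simplex contributes the cone from the apex b over the boundary of P.
\<close>
definition attach :: "'v set set \<Rightarrow> 'v set \<Rightarrow> 'v set \<Rightarrow> ('v \<Rightarrow> 'v) \<Rightarrow> 'v \<Rightarrow> 'v set set" where
  "attach F f P \<mu> b =
     (F - {f}) \<union> (\<lambda>B. B \<union> \<mu> ` (P - B)) ` {B. B \<subseteq> P \<and> B \<noteq> {} \<and> B \<noteq> P}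
       \<union> (\<lambda>x. insert b (P - {x})) ` P"

lemma is_cplus_facets:
  assumes "is_cplus d G b bs"
  obtains V s f where "is_cross_data d V s" "f \<in> cross_facets V s" "b \<notin> V" "bs = s ` f"
    "G = (cross_facets V s - {f}) \<union> (\<lambda>x. insert b (f - {x})) ` f"
proof -
  obtain V s W f g psi where cross: "is_cross_data d V s" and W: "card W = d + 2"
    and ok: "consum_ok (cross_facets V s) (simplex_bd W) f g psi"
    and b: "b \<in> W - g" and bs: "bs = s ` f"
    and G: "G = consum (cross_facets V s) (simplex_bd W) f g psi"
    using assms unfolding is_cplus_def by blast
  have f: "f \<in> cross_facets V s" and "g \<in> simplex_bd W" and psi: "bij_betw psi f g"
    using ok unfolding consum_ok_def by blast+
  then have g: "g = W - {b}"
    using b unfolding simplex_bd_def by blast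
  have "b \<in> vertices (simplex_bd W)"
    using b W vertices_simplex_bd[of W] by simp
  then have "b \<notin> V"
    using ok vertices_cross_facets[OF cross f] unfolding consum_ok_def by blast
  moreover have "G = (cross_facets V s - {f}) \<union> (\<lambda>x. insert b (f - {x})) ` f"
    using G consum_simplex_bd[OF psi] b g by blast
  ultimately show thesis
    using that cross f bs by blast
qed

lemma consum_cplus_eq_attach:
  assumes cross: "is_cross_data d V s" and f: "f \<in> cross_facets V s" and "b \<notin> V"
    and psi: "bij_betw psi f1 (s ` f)"
  shows "consum F ((cross_facets V s - {f}) \<union> (\<lambda>x. insert b (f - {x})) ` f) f1 (s ` f) psi
    = attach F f1 f (inv_into f1 psi \<circ> s) b"
proof -
  define glue where "glue = (\<lambda>v. if v \<in> s ` f then inv_into f1 psi v else v)"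
  have disj: "f \<inter> s ` f = {}" and b: "b \<notin> s ` f"
    using cross_facet_disjoint_antipode[OF cross f] cross_facet_Un_antipode[OF cross f] \<open>b \<notin> V\<close>
    by blast+
  have "s ` f \<notin> (\<lambda>x. insert b (f - {x})) ` f"
    using b by blast
  then have G: "(cross_facets V s - {f}) \<union> (\<lambda>x. insert b (f - {x})) ` f - {s ` f}
      = (cross_facets V s - {f, s ` f}) \<union> (\<lambda>x. insert b (f - {x})) ` f"
    by blast
  have "glue ` (B \<union> s ` (f - B)) = B \<union> (inv_into f1 psi \<circ> s) ` (f - B)" if "B \<subseteq> f" for B
  proof -
    have "glue ` B = B"
      using that disj unfolding glue_def by auto
    moreover have "glue ` s ` (f - B) = (inv_into f1 psi \<circ> s) ` (f - B)"
      unfolding glue_def by auto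
    ultimately show ?thesis
      by (simp add: image_Un)
  qed
  then have mixed: "(\<lambda>h. glue ` h) ` (cross_facets V s - {f, s ` f})
      = (\<lambda>B. B \<union> (inv_into f1 psi \<circ> s) ` (f - B)) ` {B. B \<subseteq> f \<and> B \<noteq> {} \<and> B \<noteq> f}"
    unfolding cross_facets_minus_antipodal_pair[OF cross f] image_image by (intro image_cong) auto
  have "glue ` insert b (f - {x}) = insert b (f - {x})" for x
    using disj b unfolding glue_def by auto
  then have cone: "(\<lambda>h. glue ` h) ` (\<lambda>x. insert b (f - {x})) ` f = (\<lambda>x. insert b (f - {x})) ` f"
    by (simp add: image_image)
  show ?thesis
    unfolding consum_def attach_def G image_Un mixed[unfolded glue_def] cone[unfolded glue_def]
    by blast
qed

lemma insert_apex_subset_vertices_cone: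
  assumes "2 \<le> card f"
  shows "insert b f \<subseteq> vertices ((\<lambda>x. insert b (f - {x})) ` f)"
proof
  fix v assume v: "v \<in> insert b f"
  obtain x where x: "x \<in> f" "x \<noteq> v"
    using assms by (rule obtain_other_element)
  then show "v \<in> vertices ((\<lambda>x. insert b (f - {x})) ` f)"
    using v unfolding vertices_def by blast
qed

locale attachment =
  fixes F :: "'v set set" and f P :: "'v set" and \<mu> :: "'v \<Rightarrow> 'v" and b :: 'v
  assumes finite_vertices: "finite (vertices F)"
    and facet: "f \<in> F"
    and finite_P: "finite P" and card_P: "3 \<le> card P"
    and P_fresh: "P \<inter> vertices F = {}"
    and b_fresh: "b \<notin> vertices F" "b \<notin> P"
    and bij_mu: "bij_betw \<mu> P f"
begin

abbreviation F' :: "'v set set" where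
  "F' \<equiv> attach F f P \<mu> b"

lemma facet_subset_vertices: "f \<subseteq> vertices F"
  using facet unfolding vertices_def by blast

lemma image_mu: "\<mu> ` P = f"
  using bij_mu by (simp add: bij_betw_def)

lemma exists_other: "\<exists>q\<in>P. q \<noteq> p"
proof -
  have "2 \<le> card P"
    using card_P by simp
  then obtain q where "q \<in> P" "q \<noteq> p"
    by (rule obtain_other_element)
  then show ?thesis
    by blast
qed

lemma facet_nonempty: "f \<noteq> {}"
  using exists_other image_mu by blast

lemma old_facet_in_attach: "e \<in> F \<Longrightarrow> e \<noteq> f \<Longrightarrow> e \<in> F'"
  unfolding attach_def by blast

lemma cone_facet_in_attach: "x \<in> P \<Longrightarrow> insert b (P - {x}) \<in> F'"
  unfolding attach_def by blast

lemma mixed_facet_in_attach: "B \<subseteq> P \<Longrightarrow> B \<noteq> {} \<Longrightarrow> B \<noteq> P \<Longrightarrow> B \<union> \<mu> ` (P - B) \<in> F'"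
  unfolding attach_def by blast

lemma star_facet_in_attach:
  assumes "p \<in> P"
  shows "insert p (\<mu> ` (P - {p})) \<in> F'"
  using mixed_facet_in_attach[of "{p}"] assms exists_other[of p] by auto

lemma antistar_facet_in_attach:
  assumes "p \<in> P"
  shows "insert (\<mu> p) (P - {p}) \<in> F'"
proof -
  have "P - (P - {p}) = {p}"
    using assms by auto
  then show ?thesis
    using mixed_facet_in_attach[of "P - {p}"] assms exists_other[of p] by auto
qed

lemma attach_facetE:
  assumes "e \<in> F'"
  obtains "e \<in> F" "e \<noteq> f"
    | B where "B \<subseteq> P" "e = B \<union> \<mu> ` (P - B)"
    | x where "x \<in> P" "e = insert b (P - {x})"
  using assms unfolding attach_def by blast

lemma vertices_attach: "vertices F' = vertices F \<union> P \<union> {b}"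
proof
  show "vertices F' \<subseteq> vertices F \<union> P \<union> {b}"
  proof
    fix v assume "v \<in> vertices F'"
    then obtain e where "e \<in> F'" "v \<in> e"
      unfolding vertices_def by blast
    then show "v \<in> vertices F \<union> P \<union> {b}"
      using facet_subset_vertices image_mu
      by (cases rule: attach_facetE) (auto simp: vertices_def)
  qed
next
  have "f \<subseteq> vertices F'"
  proof
    fix v assume "v \<in> f"
    then obtain x where x: "x \<in> P" "v = \<mu> x"
      using image_mu by blast
    obtain q where "q \<in> P" "q \<noteq> x"
      using exists_other by blast
    then show "v \<in> vertices F'"
      using star_facet_in_attach[of q] x unfolding vertices_def by blast
  qed
  moreover have "vertices F - f \<subseteq> vertices F'"
    using old_facet_in_attach unfolding vertices_def by blast
  moreover have "P \<union> {b} \<subseteq> vertices F'"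
  proof
    fix v assume "v \<in> P \<union> {b}"
    moreover obtain q where "q \<in> P" "q \<noteq> v"
      using exists_other by blast
    ultimately show "v \<in> vertices F'"
      using cone_facet_in_attach[of q] unfolding vertices_def by blast
  qed
  ultimately show "vertices F \<union> P \<union> {b} \<subseteq> vertices F'"
    by blast
qed

lemma card_vertices_attach: "card (vertices F') = card (vertices F) + card P + 1"
  using finite_vertices finite_P P_fresh b_fresh
  by (simp add: vertices_attach card_Un_disjoint Int_commute)

lemma card_attach_subset:
  assumes "T \<subseteq> vertices F'"
  shows "card T = card (T \<inter> vertices F) + card (T \<inter> P) + (if b \<in> T then 1 else 0)"
proof -
  have fin: "finite T"
    using assms finite_vertices finite_P vertices_attach finite_subset by auto
  have "T = (T \<inter> vertices F) \<union> (T \<inter> P) \<union> (T \<inter> {b})"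
    using assms vertices_attach by auto
  moreover have "card ((T \<inter> vertices F) \<union> (T \<inter> P) \<union> (T \<inter> {b}))
      = card (T \<inter> vertices F) + card (T \<inter> P) + card (T \<inter> {b})"
    using fin P_fresh b_fresh by (subst card_Un_disjoint; auto simp: card_Un_disjoint)+
  ultimately show ?thesis
    by (simp add: Int_insert_right)
qed

lemma transversal_attach_restrict:
  assumes T: "is_transversal F' T" and hit: "T \<inter> f \<noteq> {}"
  shows "is_transversal F (T \<inter> vertices F)"
  unfolding is_transversal_def
proof (intro conjI ballI)
  fix e assume e: "e \<in> F"
  show "T \<inter> vertices F \<inter> e \<noteq> {}"
  proof (cases "e = f")
    case False
    then have "T \<inter> e \<noteq> {}"
      using T e old_facet_in_attach unfolding is_transversal_def by blast
    then show ?thesis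
      using e unfolding vertices_def by blast
  qed (use hit facet_subset_vertices in blast)
qed blast

lemma transversal_attach_restrict_insert:
  assumes T: "is_transversal F' T" and a: "a \<in> f"
  shows "is_transversal F (insert a (T \<inter> vertices F))"
  unfolding is_transversal_def
proof (intro conjI ballI)
  show "insert a (T \<inter> vertices F) \<subseteq> vertices F"
    using a facet_subset_vertices by blast
  fix e assume e: "e \<in> F"
  show "insert a (T \<inter> vertices F) \<inter> e \<noteq> {}"
  proof (cases "e = f")
    case False
    then have "T \<inter> e \<noteq> {}"
      using T e old_facet_in_attach unfolding is_transversal_def by blast
    then show ?thesis
      using e unfolding vertices_def by blast
  qed (use a in blast)
qed

lemma transversal_attach_avoiding_facet:
  assumes T: "is_transversal F' T" and "T \<inter> f = {}"
  shows "P \<subseteq> T"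
proof
  fix p assume p: "p \<in> P"
  have "T \<inter> insert p (\<mu> ` (P - {p})) \<noteq> {}"
    using T star_facet_in_attach[OF p] unfolding is_transversal_def by blast
  then show "p \<in> T"
    using \<open>T \<inter> f = {}\<close> image_mu by blast
qed

lemma transversal_attach_avoiding_P:
  assumes T: "is_transversal F' T" and "T \<inter> P = {}"
  shows "f \<subseteq> T" "b \<in> T"
proof
  fix y assume "y \<in> f"
  then obtain p where p: "p \<in> P" "y = \<mu> p"
    using image_mu by blast
  have "T \<inter> insert (\<mu> p) (P - {p}) \<noteq> {}"
    using T antistar_facet_in_attach[OF p(1)] unfolding is_transversal_def by blast
  then show "y \<in> T"
    using \<open>T \<inter> P = {}\<close> p by blast
next
  obtain x where "x \<in> P"
    using exists_other by blast
  then have "T \<inter> insert b (P - {x}) \<noteq> {}"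
    using T cone_facet_in_attach unfolding is_transversal_def by blast
  then show "b \<in> T"
    using \<open>T \<inter> P = {}\<close> by blast
qed

lemma attach_apex_facet:
  assumes "e \<in> F'" "b \<in> e"
  obtains x where "x \<in> P" "e = insert b (P - {x})"
  using assms(1)
proof (cases rule: attach_facetE)
  case 1
  then show ?thesis using assms(2) b_fresh unfolding vertices_def by blast
next
  case (2 B)
  then show ?thesis using assms(2) b_fresh image_mu facet_subset_vertices by blast
qed

lemma transversal_attach_meeting_P:
  assumes T: "is_transversal F' T" and p: "p \<in> T" "p \<in> P"
  shows "2 \<le> card (T \<inter> P) + (if b \<in> T then 1 else 0)"
proof (cases "b \<in> T")
  case True
  have "card (T \<inter> P) \<noteq> 0"
    using p finite_P by auto
  then show ?thesis
    using True by simp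
next
  case False
  have "T \<inter> insert b (P - {p}) \<noteq> {}"
    using T cone_facet_in_attach[OF p(2)] unfolding is_transversal_def by blast
  then obtain q where "q \<in> T \<inter> P" "q \<noteq> p"
    using False by blast
  then have "card {p, q} \<le> card (T \<inter> P)"
    using p finite_P by (intro card_mono) auto
  then show ?thesis
    using \<open>q \<noteq> p\<close> by simp
qed

context
  fixes m :: nat
  assumes lower_bound: "\<And>T. is_transversal F T \<Longrightarrow> m \<le> card T"
    and lower_bound_facet: "\<And>T. is_transversal F T \<Longrightarrow> f \<subseteq> T \<Longrightarrow> m + 1 \<le> card T"
begin

lemma attach_lower_bound_avoiding_facet:
  assumes T: "is_transversal F' T" and "T \<inter> f = {}"
  shows "m - 1 + card P \<le> card (T \<inter> vertices F) + card (T \<inter> P)"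
proof -
  obtain a where "a \<in> f"
    using facet_nonempty by blast
  then have "m \<le> card (insert a (T \<inter> vertices F))"
    using lower_bound transversal_attach_restrict_insert[OF T] by blast
  then have "m \<le> card (T \<inter> vertices F) + 1"
    using finite_vertices by (simp add: card_insert_if split: if_splits)
  moreover have "T \<inter> P = P"
    using transversal_attach_avoiding_facet[OF assms] by blast
  ultimately show ?thesis
    by simp
qed

lemma attach_transversal_lower_bound:
  assumes T: "is_transversal F' T"
  shows "m + 2 \<le> card T"
proof -
  have card_T: "card T = card (T \<inter> vertices F) + card (T \<inter> P) + (if b \<in> T then 1 else 0)"
    using T card_attach_subset unfolding is_transversal_def by blast
  consider (P_missed) "T \<inter> P = {}" | (f_missed) "T \<inter> f = {}"
    | (both_hit) "T \<inter> P \<noteq> {}" "T \<inter> f \<noteq> {}"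
    by blast
  then show ?thesis
  proof cases
    case P_missed
    then have "f \<subseteq> T" "b \<in> T"
      using transversal_attach_avoiding_P[OF T] by blast+
    moreover have "T \<inter> f \<noteq> {}"
      using \<open>f \<subseteq> T\<close> facet_nonempty by blast
    moreover have "f \<subseteq> T \<inter> vertices F"
      using \<open>f \<subseteq> T\<close> facet_subset_vertices by blast
    ultimately have "m + 1 \<le> card (T \<inter> vertices F)"
      using lower_bound_facet transversal_attach_restrict[OF T] by blast
    then show ?thesis
      using card_T \<open>b \<in> T\<close> by simp
  next
    case f_missed
    then show ?thesis
      using attach_lower_bound_avoiding_facet[OF T] card_T card_P by simp
  next
    case both_hit
    then obtain p where "p \<in> T" "p \<in> P"
      by blast
    then have "2 \<le> card (T \<inter> P) + (if b \<in> T then 1 else 0)"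
      by (rule transversal_attach_meeting_P[OF T])
    moreover have "m \<le> card (T \<inter> vertices F)"
      using lower_bound[OF transversal_attach_restrict[OF T both_hit(2)]] .
    ultimately show ?thesis
      using card_T by simp
  qed
qed

lemma attach_apex_transversal_lower_bound:
  assumes T: "is_transversal F' T" and e: "e \<in> F'" "b \<in> e" "e \<subseteq> T"
  shows "m + 3 \<le> card T"
proof -
  have card_T: "card T = card (T \<inter> vertices F) + card (T \<inter> P) + (if b \<in> T then 1 else 0)"
    using T card_attach_subset unfolding is_transversal_def by blast
  obtain x where x: "x \<in> P" "e = insert b (P - {x})"
    using attach_apex_facet e(1,2) .
  then have "card (P - {x}) \<le> card (T \<inter> P)"
    using e(3) finite_P by (intro card_mono) auto
  then have "card P - 1 \<le> card (T \<inter> P)"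
    using x(1) finite_P by simp
  moreover have "b \<in> T"
    using e by blast
  moreover have "m - 1 + card P \<le> card (T \<inter> vertices F) + card (T \<inter> P)
      \<or> m \<le> card (T \<inter> vertices F)"
    using attach_lower_bound_avoiding_facet[OF T] lower_bound[OF transversal_attach_restrict[OF T]]
    by blast
  ultimately show ?thesis
    using card_T card_P by auto
qed

end

lemma attach_transversal_extend:
  assumes T: "is_transversal F T" and a: "a \<in> T" "a \<in> f"
  obtains T' where "is_transversal F' T'" "b \<in> T'" "card T' = card T + 2"
proof -
  obtain p where p: "p \<in> P" "\<mu> p = a"
    using a image_mu by blast
  have TU: "T \<subseteq> vertices F"
    using T unfolding is_transversal_def by blast
  have "is_transversal F' (insert b (insert p T))"
    unfolding is_transversal_def
  proof (intro conjI ballI)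
    show "insert b (insert p T) \<subseteq> vertices F'"
      using TU p vertices_attach by blast
    fix e assume "e \<in> F'"
    then show "insert b (insert p T) \<inter> e \<noteq> {}"
    proof (cases rule: attach_facetE)
      case 1
      then show ?thesis using T unfolding is_transversal_def by blast
    next
      case (2 B)
      show ?thesis
      proof (cases "p \<in> B")
        case False
        then have "a \<in> e" using 2 p by blast
        then show ?thesis using a by blast
      qed (use 2 in blast)
    next
      case (3 x)
      then show ?thesis by blast
    qed
  qed
  moreover have "p \<notin> T" "b \<notin> insert p T" "finite T"
    using TU p P_fresh b_fresh finite_vertices finite_subset by blast+
  then have "card (insert b (insert p T)) = card T + 2"
    by simp
  ultimately show thesis
    using that by blast
qed

end

lemma two_le_card_transversal_simplex_bd:
  assumes W: "finite W" "W \<noteq> {}" and T: "is_transversal (simplex_bd W) T"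
  shows "2 \<le> card T"
proof (rule ccontr)
  have facet: "W - {w} \<in> simplex_bd W" if "w \<in> W" for w
    using that unfolding simplex_bd_def by blast
  have "T \<subseteq> W"
    using T unfolding is_transversal_def vertices_def simplex_bd_def by blast
  then have "finite T"
    using W(1) finite_subset by blast
  moreover obtain w where "w \<in> W"
    using W(2) by blast
  then obtain t where "t \<in> T"
    using T facet unfolding is_transversal_def by blast
  moreover assume "\<not> 2 \<le> card T"
  ultimately have "T = {t}"
    using card_le_Suc0_iff_eq[of T] by auto
  then show False
    using T facet[of t] \<open>T \<subseteq> W\<close> unfolding is_transversal_def by blast
qed

lemma consum_cplus_attachment:
  assumes "is_cplus d G b bs" and ok: "consum_ok F G f1 bs psi"
    and "finite (vertices F)" and "2 \<le> d"
  obtains P \<mu> where "attachment F f1 P \<mu> b" "card P = d + 1"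
    "consum F G f1 bs psi = attach F f1 P \<mu> b"
proof -
  obtain V s f where cross: "is_cross_data d V s" and f: "f \<in> cross_facets V s"
    and "b \<notin> V" "bs = s ` f" and G: "G = (cross_facets V s - {f}) \<union> (\<lambda>x. insert b (f - {x})) ` f"
    using is_cplus_facets[OF assms(1)] .
  have disjoint: "vertices F \<inter> vertices G = {}" and "f1 \<in> F" and psi: "bij_betw psi f1 (s ` f)"
    using ok \<open>bs = s ` f\<close> unfolding consum_ok_def by blast+
  have card_f: "card f = d + 1"
    using card_cross_facet[OF cross f] .
  have "f \<subseteq> V"
    using f unfolding cross_facets_def by blast
  then have "bij_betw s f (s ` f)"
    using cross_inj_on[OF cross] inj_on_subset inj_on_imp_bij_betw by metis
  then have bij: "bij_betw (inv_into f1 psi \<circ> s) f f1"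
    using bij_betw_trans bij_betw_inv_into[OF psi] by blast
  have "2 \<le> card f"
    using card_f \<open>2 \<le> d\<close> by simp
  then have "insert b f \<subseteq> vertices ((\<lambda>x. insert b (f - {x})) ` f)"
    by (rule insert_apex_subset_vertices_cone)
  also have "\<dots> \<subseteq> vertices G"
    unfolding G vertices_def by (intro Union_mono Un_upper2)
  finally have "f \<inter> vertices F = {}" "b \<notin> vertices F"
    using disjoint by blast+
  then have "attachment F f1 f (inv_into f1 psi \<circ> s) b"
    using bij \<open>f1 \<in> F\<close> \<open>finite (vertices F)\<close> finite_cross_facet[OF cross f] card_f \<open>2 \<le> d\<close>
      \<open>b \<notin> V\<close> \<open>f \<subseteq> V\<close>
    by unfold_locales auto
  then show thesis
    using that card_f consum_cplus_eq_attach[OF cross f \<open>b \<notin> V\<close> psi] G \<open>bs = s ` f\<close> by simp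
qed

text \<open>
  Beyond the theorem, a minimum transversal is required to contain the apex: this is what allows
  it to be extended in the inductive step.
\<close>
definition X_invariant :: "nat \<Rightarrow> nat \<Rightarrow> 'v set set \<Rightarrow> 'v \<Rightarrow> bool" where
  "X_invariant d k F a \<longleftrightarrow> finite (vertices F) \<and> card (vertices F) = k * (d + 2) \<and>
     (\<forall>T. is_transversal F T \<longrightarrow> 2 * k \<le> card T) \<and>
     (\<exists>T. is_transversal F T \<and> card T = 2 * k \<and> a \<in> T) \<and>
     (\<forall>T e. is_transversal F T \<and> e \<in> F \<and> a \<in> e \<and> e \<subseteq> T \<longrightarrow> 2 * k + 1 \<le> card T)"

lemma X_invariant_simplex_bd:
  assumes W: "finite W" "card W = d + 2" "a \<in> W" and "2 \<le> d"
  shows "X_invariant d 1 (simplex_bd W) a"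
proof -
  have vertices: "vertices (simplex_bd W) = W"
    using W vertices_simplex_bd[of W] by simp
  have "2 \<le> card W"
    using W(2) by simp
  then obtain w where w: "w \<in> W" "w \<noteq> a"
    by (rule obtain_other_element)
  have "is_transversal (simplex_bd W) {a, w}"
    using W(3) w unfolding is_transversal_def vertices by (auto simp: simplex_bd_def)
  moreover have "card {a, w} = 2"
    using w by simp
  moreover have "3 \<le> card T"
    if T: "is_transversal (simplex_bd W) T" and e: "e \<in> simplex_bd W" "e \<subseteq> T" for T e
  proof -
    obtain x where "x \<in> W" "e = W - {x}"
      using e(1) unfolding simplex_bd_def by blast
    then have "card e = d + 1"
      using W by simp
    moreover have "finite T"
      using T W vertices finite_subset unfolding is_transversal_def by metis
    then have "card e \<le> card T"
      using e(2) by (rule card_mono)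
    ultimately show ?thesis
      using \<open>2 \<le> d\<close> by simp
  qed
  ultimately show ?thesis
    unfolding X_invariant_def vertices using W two_le_card_transversal_simplex_bd[of W] by auto
qed

lemma (in attachment) X_invariant_attach:
  assumes inv: "X_invariant d k F a" and "a \<in> f" and "card P = d + 1"
  shows "X_invariant d (Suc k) F' b"
proof -
  have lower_bound: "\<And>T. is_transversal F T \<Longrightarrow> 2 * k \<le> card T"
    and lower_bound_apex: "\<And>T e. is_transversal F T \<Longrightarrow> e \<in> F \<Longrightarrow> a \<in> e \<Longrightarrow> e \<subseteq> T
      \<Longrightarrow> 2 * k + 1 \<le> card T"
    and "card (vertices F) = k * (d + 2)"
    and "\<exists>T. is_transversal F T \<and> card T = 2 * k \<and> a \<in> T"
    using inv unfolding X_invariant_def by auto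
  have lower_bound_facet: "\<And>T. is_transversal F T \<Longrightarrow> f \<subseteq> T \<Longrightarrow> 2 * k + 1 \<le> card T"
    using lower_bound_apex[OF _ facet \<open>a \<in> f\<close>] .
  obtain T where "is_transversal F T" "card T = 2 * k" "a \<in> T"
    using \<open>\<exists>T. _\<close> by blast
  then obtain T' where "is_transversal F' T'" "b \<in> T'" "card T' = card T + 2"
    using attach_transversal_extend \<open>a \<in> f\<close> by blast
  then have "is_transversal F' T' \<and> card T' = 2 * Suc k \<and> b \<in> T'"
    using \<open>card T = 2 * k\<close> by simp
  moreover have "card (vertices F') = Suc k * (d + 2)"
    using card_vertices_attach \<open>card P = d + 1\<close> \<open>card (vertices F) = _\<close> by simp
  moreover have "finite (vertices F')"
    using finite_vertices finite_P vertices_attach by simp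
  moreover have "2 * Suc k \<le> card T" if "is_transversal F' T" for T
    using attach_transversal_lower_bound[OF lower_bound lower_bound_facet that] by simp
  moreover have "2 * Suc k + 1 \<le> card T"
    if "is_transversal F' T" "e \<in> F'" "b \<in> e" "e \<subseteq> T" for T e
    using attach_apex_transversal_lower_bound[OF lower_bound lower_bound_facet that] by simp
  ultimately show ?thesis
    unfolding X_invariant_def by blast
qed

lemma X_invariant:
  assumes "is_X d k F a" "2 \<le> d"
  shows "X_invariant d k F a"
  using assms
proof (induction rule: is_X.induct)
  case (base W d a)
  then show ?case
    by (rule X_invariant_simplex_bd)
next
  case (step d k F a G b bs f1 psi)
  have "finite (vertices F)" and inv: "X_invariant d k F a"
    using step.IH step.prems unfolding X_invariant_def by blast+
  then obtain P \<mu> where "attachment F f1 P \<mu> b" "card P = d + 1"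
    and "consum F G f1 bs psi = attach F f1 P \<mu> b"
    using consum_cplus_attachment[OF step.hyps(2,3) _ step.prems] by blast
  then show ?case
    using attachment.X_invariant_attach[OF _ inv step.hyps(4)] by simp
qed

lemma tau_eqI:
  assumes "is_transversal H T" "finite T" "card T = n"
    and "\<And>T. is_transversal H T \<Longrightarrow> finite T \<Longrightarrow> n \<le> card T"
  shows "tau H = n"
  unfolding tau_def by (rule Least_equality) (use assms in blast)+

theorem mainTheorem14:
  fixes d k :: nat and F :: "'v set set" and a :: 'v
  assumes "d \<ge> 2" and "k \<ge> 1" and "is_X d k F a"
  shows "card (vertices F) = k * (d + 2) \<and> tau F = 2 * k \<and>
         (\<forall>T. is_transversal F T \<and> finite T \<and> card T = 2 * k \<longrightarrow>
              \<not> (\<exists>f\<in>F. a \<in> f \<and> f \<subseteq> T))"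
proof -
  have inv: "X_invariant d k F a"
    using X_invariant assms(3,1) .
  then obtain T where "is_transversal F T" "card T = 2 * k"
    unfolding X_invariant_def by blast
  moreover have finite_transversal: "finite T" if "is_transversal F T" for T
    using that inv finite_subset unfolding X_invariant_def is_transversal_def by metis
  ultimately have "tau F = 2 * k"
    using inv by (intro tau_eqI) (simp_all add: X_invariant_def)
  then show ?thesis
    using inv unfolding X_invariant_def by fastforce
qed

end
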